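(* Let $m$ be any nonzero complex number. Then for every positive integer $n$, \begin{align*}&\sum_{k=1}^n\frac{(256m-27)k^3-3(128m+9)k^2+2(88m-3)k-24m}{km^k\binom{4k}k} =6-\frac{3(3n+1)(3n+2)}{m^n\binom{4n}n}, \\&\sum_{k=1}^n\frac{(256m-27)k^3-2(64m+27)k^2-(16m+33)k+8m-6}{(4k+1)m^k\binom{4k}k} =6-\frac{3(n+1)(3n+1)(3n+2)}{(4n+1)m^n\binom{4n}n}, \\&\sum_{k=1}^n\frac{(256m-27)k^3-384mk^2+(176m+3)k-24m}{k(3k-1)m^k\binom{4k}k} =3-\frac{3(3n+1)}{m^n\binom{4n}n}, \\&\sum_{k=1}^n\frac{(256m-27)k^3-3(128m-9)k^2+2(88m-3)k-24m}{k(3k-1)(3k-2)m^k\binom{4k}k} =3-\frac{3}{m^n\binom{4n}n}. \end{align*} Consequently, if $|m|>27/256$, then \begin{align*}\sum_{k=1}^\infty\frac{(256m-27)k^3-3(128m+9)k^2+2(88m-3)k-24m}{km^k\binom{4k}k}&=6, \\\sum_{k=1}^\infty\frac{(256m-27)k^3-2(64m+27)k^2-(16m+33)k+8m-6}{(4k+1)m^k\binom{4k}k}&=6, \\\sum_{k=1}^\infty\frac{(256m-27)k^3-384mk^2+(176m+3)k-24m}{k(3k-1)m^k\binom{4k}k}&=3, \\\sum_{k=1}^\infty\frac{(256m-27)k^3-3(128m-9)k^2+2(88m-3)k-24m}{k(3k-1)(3k-2)m^k\binom{4k}k}&=3. \end{align*} *)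

theory Defs
  imports Complex_Main
begin

end

theory Submission
  imports Defs "HOL-Real_Asymp.Real_Asymp"
begin

(* Each of the four sums telescopes. Writing B k = m^k * C(4k,k), the k-th summand is
   b(k-1)/B(k-1) - b(k)/B(k) for an explicit rational function b (the tail on the right-hand
   side); since C(4k+4,k+1)/C(4k,k) = 8(4k+1)(2k+1)(4k+3)/((3k+1)(3k+2)(3k+3)), this reduces to a
   polynomial identity in k. For |m| > 27/256 the tails b(n)/B(n) tend to 0 by the ratio test,
   as the ratio of consecutive terms of n^d/B(n) tends to 27/(256|m|). *)

lemma tendsto_zero_ratio_test:
  fixes f :: "nat \<Rightarrow> 'a::banach"
  assumes nonzero: "eventually (\<lambda>n. f n \<noteq> 0) sequentially"
    and ratio: "(\<lambda>n. norm (f (Suc n)) / norm (f n)) \<longlonglongrightarrow> l" and "l < 1"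
  shows "f \<longlonglongrightarrow> 0"
proof -
  obtain c where "l < c" "c < 1" using \<open>l < 1\<close> dense by blast
  have "eventually (\<lambda>n. norm (f (Suc n)) \<le> c * norm (f n)) sequentially"
    using order_tendstoD(2)[OF ratio \<open>l < c\<close>] nonzero
    by eventually_elim (simp add: divide_less_eq)
  then obtain N where "\<And>n. n \<ge> N \<Longrightarrow> norm (f (Suc n)) \<le> c * norm (f n)"
    by (auto simp: eventually_sequentially)
  then have "summable f" by (rule summable_ratio_test[OF \<open>c < 1\<close>])
  then show ?thesis by (rule summable_LIMSEQ_zero)
qed

lemma binomial_4n_Suc:
  "(4 * Suc n choose Suc n) * ((3*n+1) * (3*n+2) * (3*n+3))
     = (4*n choose n) * (8 * (4*n+1) * (2*n+1) * (4*n+3))"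
proof -
  have fact_4n: "fact (4 * Suc n) = (4*n+1) * (4*n+2) * (4*n+3) * (4*n+4) * (fact (4*n) :: real)"
  proof -
    have "4 * Suc n = Suc (Suc (Suc (Suc (4*n))))" by simp
    then show ?thesis by (simp only: fact_Suc) (simp add: algebra_simps)
  qed
  have fact_3n: "fact (4 * Suc n - Suc n) = (3*n+1) * (3*n+2) * (3*n+3) * (fact (4*n - n) :: real)"
  proof -
    have "4 * Suc n - Suc n = Suc (Suc (Suc (4*n - n)))" by simp
    then show ?thesis by (simp only: fact_Suc) (simp add: algebra_simps)
  qed
  have binom_Suc:
    "real (4 * Suc n choose Suc n) = fact (4 * Suc n) / (fact (Suc n) * fact (4 * Suc n - Suc n))"
    by (rule binomial_fact) simp
  have binom: "real (4 * n choose n) = fact (4 * n) / (fact n * fact (4 * n - n))"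
    by (rule binomial_fact) simp
  have "real (4 * Suc n choose Suc n) * ((3*n+1) * (3*n+2) * (3*n+3))
      = real (4*n choose n) * (8 * (4*n+1) * (2*n+1) * (4*n+3))"
    unfolding binom_Suc binom fact_4n fact_3n fact_Suc
    by (simp add: divide_simps) (simp add: algebra_simps add_nonneg_eq_0_iff)
  then show ?thesis
    by (subst of_nat_eq_iff[where 'a = real, symmetric]) simp
qed

lemma of_nat_binomial_4n_Suc:
  "(of_nat (4 * Suc n choose Suc n) :: 'a::comm_semiring_1)
     * ((3 * of_nat n + 1) * (3 * of_nat n + 2) * (3 * of_nat n + 3))
   = of_nat (4 * n choose n) * (8 * (4 * of_nat n + 1) * (2 * of_nat n + 1) * (4 * of_nat n + 3))"
  using arg_cong[OF binomial_4n_Suc, of "of_nat :: nat \<Rightarrow> 'a"]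
  by (simp only: of_nat_mult of_nat_add of_nat_numeral of_nat_1)

lemma power_over_binomial_4n_tendsto_zero:
  fixes a :: real
  assumes "a > 27/256"
  shows "(\<lambda>n. real n ^ k / (a ^ n * real (4 * n choose n))) \<longlonglongrightarrow> 0"
proof (rule tendsto_zero_ratio_test)
  define f where "f n = real n ^ k / (a ^ n * real (4 * n choose n))" for n
  have "a > 0" using assms by simp
  show "eventually (\<lambda>n. f n \<noteq> 0) sequentially"
    using eventually_gt_at_top[of 0]
    by eventually_elim (use \<open>a > 0\<close> in \<open>simp add: f_def\<close>)
  have "eventually (\<lambda>n. norm (f (Suc n)) / norm (f n) =
      ((real n + 1) / real n) ^ k * ((3 * real n + 1) * (3 * real n + 2) * (3 * real n + 3)
        / (8 * (4 * real n + 1) * (2 * real n + 1) * (4 * real n + 3))) / a) sequentially"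
    using eventually_gt_at_top[of 0]
  proof eventually_elim
    case (elim n)
    have "real (4 * Suc n choose Suc n) * ((3 * real n + 1) * (3 * real n + 2) * (3 * real n + 3))
        = real (4 * n choose n) * (8 * (4 * real n + 1) * (2 * real n + 1) * (4 * real n + 3))"
      by (rule of_nat_binomial_4n_Suc)
    then have binomial_ratio: "real (4 * n choose n) / real (4 * Suc n choose Suc n)
        = (3 * real n + 1) * (3 * real n + 2) * (3 * real n + 3)
          / (8 * (4 * real n + 1) * (2 * real n + 1) * (4 * real n + 3))"
      by (simp add: frac_eq_eq mult.commute)
    have "norm (f (Suc n)) / norm (f n)
        = (real (Suc n) / real n) ^ k * (real (4 * n choose n) / real (4 * Suc n choose Suc n)) / a"
      using elim \<open>a > 0\<close> by (simp add: f_def power_divide field_simps)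
    then show ?case unfolding binomial_ratio by (simp add: add.commute)
  qed
  moreover have "(\<lambda>n. ((real n + 1) / real n) ^ k
      * ((3 * real n + 1) * (3 * real n + 2) * (3 * real n + 3)
        / (8 * (4 * real n + 1) * (2 * real n + 1) * (4 * real n + 3))) / a)
      \<longlonglongrightarrow> 1 ^ k * (27/256) / a"
  proof -
    have lim_1: "(\<lambda>n. (real n + 1) / real n) \<longlonglongrightarrow> 1" by real_asymp
    have lim_27_256: "(\<lambda>n. (3 * real n + 1) * (3 * real n + 2) * (3 * real n + 3)
        / (8 * (4 * real n + 1) * (2 * real n + 1) * (4 * real n + 3))) \<longlonglongrightarrow> 27/256"
      by real_asymp
    show ?thesis
      using \<open>a > 0\<close>
      by (intro lim_1 lim_27_256 tendsto_divide tendsto_mult tendsto_power tendsto_const) auto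
  qed
  ultimately show "(\<lambda>n. norm (f (Suc n)) / norm (f n)) \<longlonglongrightarrow> 27 / 256 / a"
    by (simp add: tendsto_cong)
  show "27 / 256 / a < 1" using assms by simp
qed

lemma Nats_add_eq_0_iff:
  fixes x y :: "'a::semiring_char_0"
  assumes "x \<in> \<nat>" "y \<in> \<nat>"
  shows "x + y = 0 \<longleftrightarrow> x = 0 \<and> y = 0"
  using assms by (elim Nats_cases) (simp flip: of_nat_add)

definition binomial_4n_term :: "'a::field \<Rightarrow> ('a \<Rightarrow> 'a) \<Rightarrow> nat \<Rightarrow> 'a" where
  "binomial_4n_term m a n = a (of_nat n) / (m ^ n * of_nat (4 * n choose n))"

(* The relation a(k+1)/B(k+1) = b(k)/B(k) - b(k+1)/B(k+1), B(k) = m^k * C(4k,k), multiplied by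
   (3k+1)(3k+2)(3k+3) * B(k+1) and simplified with binomial_4n_Suc; only natural k matter. *)
definition telescopes_binomial_4n :: "'a::field \<Rightarrow> ('a \<Rightarrow> 'a) \<Rightarrow> ('a \<Rightarrow> 'a) \<Rightarrow> bool" where
  "telescopes_binomial_4n m a b \<longleftrightarrow> (\<forall>x\<in>\<nat>. (3*x+1) * (3*x+2) * (3*x+3) * a (x+1)
     = 8 * (4*x+1) * (2*x+1) * (4*x+3) * m * b x - (3*x+1) * (3*x+2) * (3*x+3) * b (x+1))"

lemma binomial_4n_term_Suc_telescopes:
  fixes m :: "'a::field_char_0"
  assumes "m \<noteq> 0" and "telescopes_binomial_4n m a b"
  shows "binomial_4n_term m a (Suc n) = binomial_4n_term m b n - binomial_4n_term m b (Suc n)"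
proof -
  define x where "x = (of_nat n :: 'a)"
  define B where "B = (of_nat (4 * Suc n choose Suc n) :: 'a)"
  define P where "P = (3*x+1) * (3*x+2) * (3*x+3)"
  define Q where "Q = 8 * (4*x+1) * (2*x+1) * (4*x+3)"
  have "x \<in> \<nat>" unfolding x_def by simp
  then have "P \<noteq> 0" "Q \<noteq> 0"
    unfolding P_def Q_def by (simp_all add: Nats_add_eq_0_iff)
  have "B \<noteq> 0" unfolding B_def by simp
  have binomial: "of_nat (4 * n choose n) = B * P / Q"
    using of_nat_binomial_4n_Suc[of n, where 'a = 'a] \<open>Q \<noteq> 0\<close> unfolding B_def P_def Q_def x_def
    by (simp add: eq_divide_eq)
  have certificate: "P * a (x+1) = Q * m * b x - P * b (x+1)"
    using assms(2) \<open>x \<in> \<nat>\<close> unfolding telescopes_binomial_4n_def P_def Q_def by blast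
  have x_Suc: "of_nat (Suc n) = x + 1" unfolding x_def by simp
  show ?thesis
    unfolding binomial_4n_term_def binomial x_def[symmetric] x_Suc B_def[symmetric]
    using \<open>P \<noteq> 0\<close> \<open>Q \<noteq> 0\<close> \<open>B \<noteq> 0\<close> \<open>m \<noteq> 0\<close> certificate
    by (simp add: field_simps)
qed

lemma binomial_4n_telescoping_sum:
  fixes m :: "'a::field_char_0"
  assumes "m \<noteq> 0" and "telescopes_binomial_4n m a b"
  shows "(\<Sum>k=1..n. binomial_4n_term m a k) = b 0 - binomial_4n_term m b n"
proof -
  have "(\<Sum>k=1..n. binomial_4n_term m a k) = (\<Sum>k<n. binomial_4n_term m a (Suc k))"
    by (rule sum_bounds_lt_plus1[symmetric])
  also have "\<dots> = (\<Sum>k<n. binomial_4n_term m b k - binomial_4n_term m b (Suc k))"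
    by (simp only: binomial_4n_term_Suc_telescopes[OF assms])
  also have "\<dots> = binomial_4n_term m b 0 - binomial_4n_term m b n"
    by (rule sum_lessThan_telescope')
  finally show ?thesis by (simp add: binomial_4n_term_def)
qed

lemma binomial_4n_term_tendsto_zero:
  fixes m :: "'a::real_normed_field"
  assumes "norm m > 27/256" and "(\<lambda>n. b (of_nat n)) \<in> O(\<lambda>n. of_nat n ^ k)"
  shows "binomial_4n_term m b \<longlonglongrightarrow> 0"
proof -
  from assms(2) obtain c where "eventually (\<lambda>n. norm (b (of_nat n)) \<le> c * norm (of_nat n ^ k :: 'a)) sequentially"
    by (elim landau_o.bigE)
  then have "eventually (\<lambda>n. norm (binomial_4n_term m b n)
      \<le> norm (real n ^ k / (norm m ^ n * real (4 * n choose n))) * c) sequentially"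
    by eventually_elim
      (auto simp: binomial_4n_term_def norm_divide norm_mult norm_power mult.commute intro!: divide_right_mono)
  then show ?thesis
    by (rule tendsto_0_le[OF power_over_binomial_4n_tendsto_zero[OF assms(1)]])
qed

lemma binomial_4n_telescoping_sums:
  fixes m :: "'a::real_normed_field"
  assumes "norm m > 27/256" and "telescopes_binomial_4n m a b"
    and "(\<lambda>n. b (of_nat n)) \<in> O(\<lambda>n. of_nat n ^ k)"
  shows "(\<lambda>j. binomial_4n_term m a (Suc j)) sums b 0"
proof -
  have "m \<noteq> 0" using assms(1) by auto
  have "(\<lambda>j. binomial_4n_term m b j - binomial_4n_term m b (Suc j)) sums (binomial_4n_term m b 0 - 0)"
    by (rule telescope_sums'[OF binomial_4n_term_tendsto_zero[OF assms(1,3)]])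
  then show ?thesis
    by (simp add: binomial_4n_term_Suc_telescopes[OF \<open>m \<noteq> 0\<close> assms(2)] binomial_4n_term_def[of m b 0])
qed

lemma of_real_bigo_power:
  assumes "f \<in> O(\<lambda>n. real n ^ k)"
  shows "(\<lambda>n. of_real (f n) :: 'a::real_normed_field) \<in> O(\<lambda>n. of_nat n ^ k)"
proof -
  have "(\<lambda>n. of_real (f n) :: 'a) \<in> O(\<lambda>n. of_real (real n ^ k))"
    using assms by (subst landau_o.big.of_real_iff)
  then show ?thesis by simp
qed

lemma telescopes_binomial_4n_1:
  fixes m :: "'a::field_char_0"
  shows "telescopes_binomial_4n m
    (\<lambda>x. ((256*m-27)*x^3 - 3*(128*m+9)*x^2 + 2*(88*m-3)*x - 24*m) / x)
    (\<lambda>x. 3*(3*x+1)*(3*x+2))"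
  unfolding telescopes_binomial_4n_def
  by (intro ballI, simp add: Nats_add_eq_0_iff divide_simps)
    (simp add: algebra_simps power2_eq_square power3_eq_cube)

lemma telescopes_binomial_4n_2:
  fixes m :: "'a::field_char_0"
  shows "telescopes_binomial_4n m
    (\<lambda>x. ((256*m-27)*x^3 - 2*(64*m+27)*x^2 - (16*m+33)*x + 8*m - 6) / (4*x+1))
    (\<lambda>x. 3*(x+1)*(3*x+1)*(3*x+2) / (4*x+1))"
  unfolding telescopes_binomial_4n_def
  by (intro ballI, simp add: Nats_add_eq_0_iff divide_simps)
    (simp add: algebra_simps power2_eq_square power3_eq_cube)

lemma telescopes_binomial_4n_3:
  fixes m :: "'a::field_char_0"
  shows "telescopes_binomial_4n m
    (\<lambda>x. ((256*m-27)*x^3 - 384*m*x^2 + (176*m+3)*x - 24*m) / (x * (3*x-1)))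
    (\<lambda>x. 3*(3*x+1))"
  unfolding telescopes_binomial_4n_def
  by (intro ballI, simp add: Nats_add_eq_0_iff divide_simps)
    (simp add: algebra_simps power2_eq_square power3_eq_cube)

lemma telescopes_binomial_4n_4:
  fixes m :: "'a::field_char_0"
  shows "telescopes_binomial_4n m
    (\<lambda>x. ((256*m-27)*x^3 - 3*(128*m-9)*x^2 + 2*(88*m-3)*x - 24*m) / (x * (3*x-1) * (3*x-2)))
    (\<lambda>x. 3)"
  unfolding telescopes_binomial_4n_def
  by (intro ballI, simp add: Nats_add_eq_0_iff divide_simps)
    (simp add: algebra_simps power2_eq_square power3_eq_cube)

lemma telescoping_tails_bigo:
  shows "(\<lambda>n. 3*(3*of_nat n+1)*(3*of_nat n+2) :: 'a::real_normed_field) \<in> O(\<lambda>n. of_nat n ^ 2)"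
    and "(\<lambda>n. 3*(of_nat n+1)*(3*of_nat n+1)*(3*of_nat n+2) / (4*of_nat n+1) :: 'a::real_normed_field) \<in> O(\<lambda>n. of_nat n ^ 2)"
    and "(\<lambda>n. 3*(3*of_nat n+1) :: 'a::real_normed_field) \<in> O(\<lambda>n. of_nat n ^ 1)"
    and "(\<lambda>n. 3 :: 'a::real_normed_field) \<in> O(\<lambda>n. of_nat n ^ 0)"
proof -
  have "(\<lambda>n. of_real (3*(3*real n+1)*(3*real n+2)) :: 'a) \<in> O(\<lambda>n. of_nat n ^ 2)"
    by (rule of_real_bigo_power) real_asymp
  then show "(\<lambda>n. 3*(3*of_nat n+1)*(3*of_nat n+2) :: 'a) \<in> O(\<lambda>n. of_nat n ^ 2)" by simp
  have "(\<lambda>n. of_real (3*(real n+1)*(3*real n+1)*(3*real n+2) / (4*real n+1)) :: 'a) \<in> O(\<lambda>n. of_nat n ^ 2)"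
    by (rule of_real_bigo_power) real_asymp
  then show "(\<lambda>n. 3*(of_nat n+1)*(3*of_nat n+1)*(3*of_nat n+2) / (4*of_nat n+1) :: 'a) \<in> O(\<lambda>n. of_nat n ^ 2)" by simp
  have "(\<lambda>n. of_real (3*(3*real n+1)) :: 'a) \<in> O(\<lambda>n. of_nat n ^ 1)"
    by (rule of_real_bigo_power) real_asymp
  then show "(\<lambda>n. 3*(3*of_nat n+1) :: 'a) \<in> O(\<lambda>n. of_nat n ^ 1)" by simp
  show "(\<lambda>n. 3 :: 'a) \<in> O(\<lambda>n. of_nat n ^ 0)" by simp
qed

theorem lemma2p1:
  fixes m :: complex
  assumes "m \<noteq> 0"
  shows "(\<forall>n::nat. n \<ge> 1 \<longrightarrow>
     (\<Sum>k=1..n. ((256*m-27)*of_nat k^3 - 3*(128*m+9)*of_nat k^2 + 2*(88*m-3)*of_nat k - 24*m)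
          / (of_nat k * m^k * of_nat (4*k choose k)))
       = 6 - 3*(3*of_nat n+1)*(3*of_nat n+2) / (m^n * of_nat (4*n choose n))
   \<and> (\<Sum>k=1..n. ((256*m-27)*of_nat k^3 - 2*(64*m+27)*of_nat k^2 - (16*m+33)*of_nat k + 8*m - 6)
          / ((4*of_nat k+1) * m^k * of_nat (4*k choose k)))
       = 6 - 3*(of_nat n+1)*(3*of_nat n+1)*(3*of_nat n+2) / ((4*of_nat n+1) * m^n * of_nat (4*n choose n))
   \<and> (\<Sum>k=1..n. ((256*m-27)*of_nat k^3 - 384*m*of_nat k^2 + (176*m+3)*of_nat k - 24*m)
          / (of_nat k * (3*of_nat k-1) * m^k * of_nat (4*k choose k)))
       = 3 - 3*(3*of_nat n+1) / (m^n * of_nat (4*n choose n))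
   \<and> (\<Sum>k=1..n. ((256*m-27)*of_nat k^3 - 3*(128*m-9)*of_nat k^2 + 2*(88*m-3)*of_nat k - 24*m)
          / (of_nat k * (3*of_nat k-1) * (3*of_nat k-2) * m^k * of_nat (4*k choose k)))
       = 3 - 3 / (m^n * of_nat (4*n choose n)))
  \<and> (norm m > 27/256 \<longrightarrow>
     (\<lambda>j. let k = Suc j in ((256*m-27)*of_nat k^3 - 3*(128*m+9)*of_nat k^2 + 2*(88*m-3)*of_nat k - 24*m)
          / (of_nat k * m^k * of_nat (4*k choose k))) sums 6
   \<and> (\<lambda>j. let k = Suc j in ((256*m-27)*of_nat k^3 - 2*(64*m+27)*of_nat k^2 - (16*m+33)*of_nat k + 8*m - 6)
          / ((4*of_nat k+1) * m^k * of_nat (4*k choose k))) sums 6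
   \<and> (\<lambda>j. let k = Suc j in ((256*m-27)*of_nat k^3 - 384*m*of_nat k^2 + (176*m+3)*of_nat k - 24*m)
          / (of_nat k * (3*of_nat k-1) * m^k * of_nat (4*k choose k))) sums 3
   \<and> (\<lambda>j. let k = Suc j in ((256*m-27)*of_nat k^3 - 3*(128*m-9)*of_nat k^2 + 2*(88*m-3)*of_nat k - 24*m)
          / (of_nat k * (3*of_nat k-1) * (3*of_nat k-2) * m^k * of_nat (4*k choose k))) sums 3)"
proof -
  note sum = binomial_4n_telescoping_sum[OF assms] and sums = binomial_4n_telescoping_sums[where m = m]
  show ?thesis
    using sum[OF telescopes_binomial_4n_1] sum[OF telescopes_binomial_4n_2]
      sum[OF telescopes_binomial_4n_3] sum[OF telescopes_binomial_4n_4]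
      sums[OF _ telescopes_binomial_4n_1 telescoping_tails_bigo(1)]
      sums[OF _ telescopes_binomial_4n_2 telescoping_tails_bigo(2)]
      sums[OF _ telescopes_binomial_4n_3 telescoping_tails_bigo(3)]
      sums[OF _ telescopes_binomial_4n_4 telescoping_tails_bigo(4)]
    unfolding binomial_4n_term_def Let_def by (simp add: mult.assoc)
qed

end
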